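(* Let $G$ be a connected graph and let $e_i$ be an edge of $G$ with end points $p_i,q_i$. For any $s,t\in V(G)$, $$t(G)\,t\big((G-e_i)_{st}\big)=t(G_{st})\,t(G-e_i)+\frac14\big[t(G_{p_is})-t(G_{q_is})-t(G_{p_it})+t(G_{q_it})\big]^2.$$
   Context: Graphs are finite and may have multiple edges and loops; $t(H)$ is the number of spanning trees of $H$ ($0$ if $H$ is disconnected, $1$ if $H$ has one vertex). $G-e_i$ is $G$ with the edge $e_i$ deleted. For vertices $x,y$ of $H$, $H_{xy}$ is obtained by identifying $x$ and $y$, with the convention $t(H_{xx}):=0$. *)

theory Defs
  imports Complex_Main
begin

text \<open>A finite multigraph (loops and parallel edges allowed) is given by a vertex set V,
an edge set E and an endpoint map ends :: 'e => 'v * 'v (the order of the two endpoints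
is irrelevant: adjacency below is symmetric).\<close>

definition mgraph :: "'v set \<Rightarrow> 'e set \<Rightarrow> ('e \<Rightarrow> 'v \<times> 'v) \<Rightarrow> bool" where
  "mgraph V E ends \<longleftrightarrow> finite V \<and> finite E \<and>
     (\<forall>e\<in>E. fst (ends e) \<in> V \<and> snd (ends e) \<in> V)"

definition adj :: "'e set \<Rightarrow> ('e \<Rightarrow> 'v \<times> 'v) \<Rightarrow> 'v \<Rightarrow> 'v \<Rightarrow> bool" where
  "adj F ends u v \<longleftrightarrow> (\<exists>e\<in>F. ends e = (u, v) \<or> ends e = (v, u))"

definition reach :: "'e set \<Rightarrow> ('e \<Rightarrow> 'v \<times> 'v) \<Rightarrow> 'v \<Rightarrow> 'v \<Rightarrow> bool" where
  "reach F ends = (adj F ends)\<^sup>*\<^sup>*"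

definition connected_mg :: "'v set \<Rightarrow> 'e set \<Rightarrow> ('e \<Rightarrow> 'v \<times> 'v) \<Rightarrow> bool" where
  "connected_mg V F ends \<longleftrightarrow> V \<noteq> {} \<and> (\<forall>u\<in>V. \<forall>v\<in>V. reach F ends u v)"

text \<open>F is acyclic (a forest): no edge of F lies on a cycle, i.e. the endpoints of each
edge e of F are not joined by a walk in F - {e}.  (Loops are therefore excluded.)\<close>
definition acyclic_mg :: "'e set \<Rightarrow> ('e \<Rightarrow> 'v \<times> 'v) \<Rightarrow> bool" where
  "acyclic_mg F ends \<longleftrightarrow> (\<forall>e\<in>F. \<not> reach (F - {e}) ends (fst (ends e)) (snd (ends e)))"

definition spanning_tree :: "'v set \<Rightarrow> 'e set \<Rightarrow> ('e \<Rightarrow> 'v \<times> 'v) \<Rightarrow> 'e set \<Rightarrow> bool" where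
  "spanning_tree V E ends T \<longleftrightarrow> T \<subseteq> E \<and> connected_mg V T ends \<and> acyclic_mg T ends"

definition ntrees :: "'v set \<Rightarrow> 'e set \<Rightarrow> ('e \<Rightarrow> 'v \<times> 'v) \<Rightarrow> nat" where
  "ntrees V E ends = card {T. spanning_tree V E ends T}"

definition merge :: "'v \<Rightarrow> 'v \<Rightarrow> 'v \<Rightarrow> 'v" where
  "merge x y v = (if v = y then x else v)"

text \<open>t(H_xy), with the convention t(H_xx) = 0\<close>
definition ntrees_id :: "'v set \<Rightarrow> 'e set \<Rightarrow> ('e \<Rightarrow> 'v \<times> 'v) \<Rightarrow> 'v \<Rightarrow> 'v \<Rightarrow> nat" where
  "ntrees_id V E ends x y =
    (if x = y then 0
     else ntrees (merge x y ` V) E (\<lambda>e. map_prod (merge x y) (merge x y) (ends e)))"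

end

(*
  Fix a root s.  By the matrix-tree theorem, which follows from deletion-contraction of an edge
  at the root and Laplace expansion, every graph H on V has t(H) = det L_H for the reduced
  Laplacian L_H.  Adding an edge xy adds the rank-one matrix d d^T with d = chi_x - chi_y
  (chi_s = 0), and deletion-contraction gives t(H + xy) = t(H) + t(H_xy).  So, with B the
  inverse of L_G and R(x, y) = d^T B d, the matrix determinant lemma yields
  t(G_xy) = t(G) R(x, y) and t(G - e_i) = t(G) (1 - R(p_i, q_i)), and two successive rank-one
  updates give t((G - e_i)_st) = t(G) (R(s, t) (1 - R(p_i, q_i)) + (b^T B c)^2) with
  b = chi_p_i - chi_q_i and c = chi_s - chi_t.  The theorem follows, since by polarization
  -2 b^T B c = R(p_i, s) - R(q_i, s) - R(p_i, t) + R(q_i, t).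
*)

theory Submission
  imports Defs "Jordan_Normal_Form.Determinant"
begin

abbreviation merge_ends :: "'v \<Rightarrow> 'v \<Rightarrow> ('e \<Rightarrow> 'v \<times> 'v) \<Rightarrow> 'e \<Rightarrow> 'v \<times> 'v" where
  "merge_ends x y ends \<equiv> \<lambda>e. map_prod (merge x y) (merge x y) (ends e)"

section \<open>Walks\<close>

lemma adj_commute: "adj F ends u v \<longleftrightarrow> adj F ends v u"
  by (auto simp: adj_def)

lemma reach_refl [simp]: "reach F ends u u"
  by (simp add: reach_def)

lemma adj_imp_reach: "adj F ends u v \<Longrightarrow> reach F ends u v"
  by (simp add: reach_def)

lemma reach_trans: "reach F ends u v \<Longrightarrow> reach F ends v w \<Longrightarrow> reach F ends u w"
  unfolding reach_def by (rule rtranclp_trans)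

lemma reach_sym: "reach F ends u v \<Longrightarrow> reach F ends v u"
  unfolding reach_def
proof (induction rule: rtranclp_induct)
  case (step y z)
  then show ?case by (metis adj_commute converse_rtranclp_into_rtranclp)
qed simp

lemma reach_mono: "F \<subseteq> F' \<Longrightarrow> reach F ends u v \<Longrightarrow> reach F' ends u v"
  unfolding reach_def adj_def by (erule rtranclp_mono[THEN predicate2D, rotated]) blast

lemma reach_map_vertices: "reach T ends u v \<Longrightarrow> reach T (\<lambda>e. map_prod f f (ends e)) (f u) (f v)"
  unfolding reach_def
proof (induction rule: rtranclp_induct)
  case (step y z)
  then have "adj T (\<lambda>e. map_prod f f (ends e)) (f y) (f z)"
    by (force simp: adj_def)
  with step.IH show ?case by (rule rtranclp.rtrancl_into_rtrancl)
qed simp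

lemma reach_insert_loop:
  assumes "ends g = (z, z)" and "reach (insert g T) ends a b"
  shows "reach T ends a b"
  using assms(2) unfolding reach_def
proof (induction rule: rtranclp_induct)
  case (step y w)
  show ?case
  proof (cases "adj T ends y w")
    case True
    with step.IH show ?thesis by (rule rtranclp.rtrancl_into_rtrancl)
  next
    case False
    with step.hyps(2) assms(1) have "y = w" by (auto simp: adj_def)
    with step.IH show ?thesis by simp
  qed
qed simp

lemma reach_avoiding_isolated:
  assumes "\<forall>e\<in>T. fst (ends e) \<noteq> r \<and> snd (ends e) \<noteq> r" and "reach T ends r v"
  shows "v = r"
  using assms(2) unfolding reach_def
  by (induction rule: rtranclp_induct) (use assms(1) in \<open>auto simp: adj_def\<close>)

text \<open>Cut a walk after its last traversal of e.\<close>

lemma reach_Diff_edge_cases: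
  "reach F ends u v \<Longrightarrow> reach (F - {e}) ends u v \<or> reach (F - {e}) ends (fst (ends e)) v
     \<or> reach (F - {e}) ends (snd (ends e)) v"
  unfolding reach_def
proof (induction rule: converse_rtranclp_induct)
  case (step y z)
  show ?case
  proof (cases "adj (F - {e}) ends y z")
    case True
    with step.IH show ?thesis by (meson converse_rtranclp_into_rtranclp)
  next
    case False
    with step.hyps(1) have "ends e = (y, z) \<or> ends e = (z, y)" by (auto simp: adj_def)
    with step.IH show ?thesis by auto
  qed
qed simp

lemma reach_first_edge:
  "finite T \<Longrightarrow> reach T ends a b \<Longrightarrow> a \<noteq> b \<Longrightarrow>
   \<exists>e\<in>T. \<exists>z. (ends e = (a, z) \<or> ends e = (z, a)) \<and> reach (T - {e}) ends z b"
proof (induction "card T" arbitrary: T rule: less_induct)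
  case less
  from less.prems(2,3) obtain c where "adj T ends a c" and cb: "reach T ends c b"
    unfolding reach_def by (metis converse_rtranclpE)
  then obtain e1 where e1: "e1 \<in> T" "ends e1 = (a, c) \<or> ends e1 = (c, a)"
    by (auto simp: adj_def)
  have "reach (T - {e1}) ends c b \<or> reach (T - {e1}) ends a b"
    using reach_Diff_edge_cases[OF cb, of e1] e1(2) by auto
  then show ?case
  proof
    assume "reach (T - {e1}) ends c b"
    with e1 show ?thesis by blast
  next
    assume "reach (T - {e1}) ends a b"
    with less.hyps[OF card_Diff1_less[OF less.prems(1) e1(1)]] less.prems(1,3)
    obtain e z where "e \<in> T - {e1}" "ends e = (a, z) \<or> ends e = (z, a)"
      and "reach (T - {e1} - {e}) ends z b"
      by auto
    moreover have "T - {e1} - {e} \<subseteq> T - {e}" by auto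
    ultimately show ?thesis by (meson DiffD1 reach_mono)
  qed
qed

section \<open>Contracting an edge\<close>

lemma merge_eq_imp_reach:
  assumes "g \<in> S" "ends g = (x, y) \<or> ends g = (y, x)" "merge x y a = merge x y b"
  shows "reach S ends a b"
proof (cases "a = b")
  case False
  with assms(3) have "(a = x \<and> b = y) \<or> (a = y \<and> b = x)"
    by (auto simp: merge_def split: if_splits)
  moreover have "adj S ends x y" using assms(1,2) by (auto simp: adj_def)
  ultimately show ?thesis by (metis adj_imp_reach adj_commute)
qed simp

lemma reach_merge:
  assumes "ends g = (x, y) \<or> ends g = (y, x)" and "reach (insert g T) ends u v"
  shows "reach T (merge_ends x y ends) (merge x y u) (merge x y v)"
proof -
  have "reach (insert g T) (merge_ends x y ends) (merge x y u) (merge x y v)"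
    using assms(2) by (rule reach_map_vertices)
  moreover have "merge_ends x y ends g = (x, x)"
    using assms(1) by (auto simp: merge_def)
  ultimately show ?thesis by (blast intro: reach_insert_loop)
qed

lemma reach_unmerge:
  assumes g: "ends g = (x, y) \<or> ends g = (y, x)"
    and "reach T (merge_ends x y ends) (merge x y u) (merge x y v)"
  shows "reach (insert g T) ends u v"
proof -
  have "reach (insert g T) ends u v"
    if "reach T (merge_ends x y ends) U W" "merge x y u = U" "merge x y v = W" for U W
    using that unfolding reach_def[of T]
  proof (induction arbitrary: v rule: rtranclp_induct)
    case base
    then show ?case using merge_eq_imp_reach[of g "insert g T" ends x y u v] g by auto
  next
    case (step W' W)
    from step.hyps(2) obtain e where e: "e \<in> T"
      "merge_ends x y ends e = (W', W) \<or> merge_ends x y ends e = (W, W')"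
      by (auto simp: adj_def)
    obtain a b where ab: "ends e = (a, b)" by fastforce
    have ab_adj: "adj (insert g T) ends a b" using e(1) ab by (auto simp: adj_def)
    consider "merge x y a = W'" "merge x y b = W" | "merge x y b = W'" "merge x y a = W"
      using e(2) ab by auto
    then show ?case
    proof cases
      case 1
      then have "reach (insert g T) ends u a" "reach (insert g T) ends b v"
        using step.IH[OF step.prems(1)] merge_eq_imp_reach[of g "insert g T" ends x y b v]
          g step.prems(2) by auto
      with ab_adj show ?thesis by (meson adj_imp_reach reach_trans)
    next
      case 2
      then have "reach (insert g T) ends u b" "reach (insert g T) ends a v"
        using step.IH[OF step.prems(1)] merge_eq_imp_reach[of g "insert g T" ends x y a v]
          g step.prems(2) by auto
      with ab_adj show ?thesis by (meson adj_imp_reach adj_commute reach_trans)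
    qed
  qed
  with assms(2) show ?thesis by blast
qed

lemma connected_insert_iff_merge:
  assumes "ends g = (x, y) \<or> ends g = (y, x)"
  shows "connected_mg V (insert g T) ends \<longleftrightarrow> connected_mg (merge x y ` V) T (merge_ends x y ends)"
proof -
  have "reach (insert g T) ends u v \<longleftrightarrow>
      reach T (merge_ends x y ends) (merge x y u) (merge x y v)" for u v
    using reach_merge[where ends=ends and g=g and T=T] reach_unmerge[where ends=ends and g=g and T=T]
      assms by blast
  then show ?thesis
    unfolding connected_mg_def by blast
qed

text \<open>A walk from x to y in T starts with an edge from x to some z, which after merging
  x and y closes the cycle z -> y = x -> z.\<close>

lemma acyclic_merge_imp_not_reach:
  assumes "finite T" "x \<noteq> y" "acyclic_mg T (merge_ends x y ends)"
  shows "\<not> reach T ends x y"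
proof
  assume "reach T ends x y"
  from reach_first_edge[OF assms(1) this assms(2)]
  obtain e z where e: "e \<in> T" "ends e = (x, z) \<or> ends e = (z, x)"
    and zy: "reach (T - {e}) ends z y"
    by blast
  have zx: "reach (T - {e}) (merge_ends x y ends) (merge x y z) x"
    using reach_map_vertices[OF zy, of "merge x y"] by (simp add: merge_def)
  have "merge x y x = x"
    by (simp add: merge_def)
  with e(2) zx reach_sym[OF zx] have "reach (T - {e}) (merge_ends x y ends)
      (fst (merge_ends x y ends e)) (snd (merge_ends x y ends e))"
    by auto
  with assms(3) e(1) show False
    unfolding acyclic_mg_def by blast
qed

lemma acyclic_insert_iff_merge:
  assumes g: "ends g = (x, y) \<or> ends g = (y, x)" and "x \<noteq> y" "g \<notin> T" "finite T"
  shows "acyclic_mg (insert g T) ends \<longleftrightarrow> acyclic_mg T (merge_ends x y ends)"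
proof
  assume acyc: "acyclic_mg (insert g T) ends"
  show "acyclic_mg T (merge_ends x y ends)"
    unfolding acyclic_mg_def
  proof (intro ballI notI)
    fix e
    assume "e \<in> T" and "reach (T - {e}) (merge_ends x y ends)
      (fst (merge_ends x y ends e)) (snd (merge_ends x y ends e))"
    then have "e \<in> insert g T" "reach (insert g T - {e}) ends (fst (ends e)) (snd (ends e))"
      using reach_unmerge[where ends=ends and g=g and T="T - {e}", OF g] assms(3)
      by (auto simp: insert_Diff_if)
    with acyc show False by (auto simp: acyclic_mg_def)
  qed
next
  assume acyc: "acyclic_mg T (merge_ends x y ends)"
  show "acyclic_mg (insert g T) ends"
    unfolding acyclic_mg_def
  proof (intro ballI notI)
    fix e
    assume e: "e \<in> insert g T" and r: "reach (insert g T - {e}) ends (fst (ends e)) (snd (ends e))"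
    show False
    proof (cases "e = g")
      case True
      with r assms(3) have "reach T ends (fst (ends g)) (snd (ends g))" by simp
      with g have "reach T ends x y" by (auto dest: reach_sym)
      with acyclic_merge_imp_not_reach[OF assms(4,2) acyc] show False by blast
    next
      case False
      with r have "reach (T - {e}) (merge_ends x y ends)
          (fst (merge_ends x y ends e)) (snd (merge_ends x y ends e))"
        using reach_merge[where ends=ends and g=g and T="T - {e}", OF g]
        by (simp add: insert_Diff_if split: prod.splits)
      with acyc e False show False by (auto simp: acyclic_mg_def)
    qed
  qed
qed

lemma spanning_tree_insert_iff_merge:
  assumes "ends g = (x, y) \<or> ends g = (y, x)" "x \<noteq> y" "g \<in> F" "T \<subseteq> F - {g}" "finite T"
  shows "spanning_tree V F ends (insert g T) \<longleftrightarrow>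
    spanning_tree (merge x y ` V) (F - {g}) (merge_ends x y ends) T"
  using assms connected_insert_iff_merge[where ends=ends and g=g, OF assms(1)]
    acyclic_insert_iff_merge[where ends=ends and g=g, OF assms(1,2)]
  unfolding spanning_tree_def by blast

section \<open>Counting spanning trees\<close>

lemma mgraph_Diff: "mgraph V F ends \<Longrightarrow> mgraph V (F - {e}) ends"
  by (auto simp: mgraph_def)

lemma finite_spanning_trees: "finite F \<Longrightarrow> finite {T. spanning_tree V F ends T}"
  by (rule finite_subset[of _ "Pow F"]) (auto simp: spanning_tree_def)

lemma ntrees_deletion_contraction:
  assumes "mgraph V F ends" "g \<in> F" "ends g = (x, y) \<or> ends g = (y, x)" "x \<noteq> y"
  shows "ntrees V F ends = ntrees V (F - {g}) ends
    + ntrees (merge x y ` V) (F - {g}) (merge_ends x y ends)"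
proof -
  define avoiding where "avoiding = {T. spanning_tree V (F - {g}) ends T}"
  define contracted
    where "contracted = {T. spanning_tree (merge x y ` V) (F - {g}) (merge_ends x y ends) T}"
  have finF: "finite F" using assms(1) by (simp add: mgraph_def)
  have insert_iff: "spanning_tree V F ends (insert g T) \<longleftrightarrow> T \<in> contracted"
    if "T \<subseteq> F - {g}" for T
  proof -
    have "finite T" using that finF by (meson finite_Diff finite_subset)
    with that show ?thesis
      unfolding contracted_def
      using spanning_tree_insert_iff_merge[where ends=ends and g=g, OF assms(3,4,2)] by simp
  qed
  have "{T. spanning_tree V F ends T} = avoiding \<union> insert g ` contracted"
  proof (intro equalityI subsetI)
    fix T assume "T \<in> {T. spanning_tree V F ends T}"
    then have T: "spanning_tree V F ends T" by simp
    show "T \<in> avoiding \<union> insert g ` contracted"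
    proof (cases "g \<in> T")
      case True
      then have "T = insert g (T - {g})" by blast
      moreover have "T - {g} \<subseteq> F - {g}" using T by (auto simp: spanning_tree_def)
      ultimately show ?thesis using T insert_iff by (metis UnI2 image_eqI)
    next
      case False
      with T show ?thesis by (auto simp: avoiding_def spanning_tree_def)
    qed
  next
    fix T assume "T \<in> avoiding \<union> insert g ` contracted"
    then show "T \<in> {T. spanning_tree V F ends T}"
      using insert_iff by (auto simp: avoiding_def contracted_def spanning_tree_def)
  qed
  moreover have "avoiding \<inter> insert g ` contracted = {}"
    by (auto simp: avoiding_def spanning_tree_def)
  moreover have "inj_on (insert g) contracted"
    by (rule inj_onI) (auto simp: contracted_def spanning_tree_def)
  moreover have "finite avoiding" "finite contracted"
    using finF by (simp_all add: avoiding_def contracted_def finite_spanning_trees)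
  ultimately show ?thesis
    unfolding ntrees_def avoiding_def[symmetric] contracted_def[symmetric]
    by (simp add: card_Un_disjoint card_image)
qed

lemma spanning_tree_image:
  assumes "inj f"
  shows "spanning_tree V (f ` F) ends (f ` T) \<longleftrightarrow> spanning_tree V F (\<lambda>e. ends (f e)) T"
proof -
  have "adj (f ` S) ends = adj S (\<lambda>e. ends (f e))" for S
    by (auto simp: adj_def fun_eq_iff)
  then have reach_image: "reach (f ` S) ends = reach S (\<lambda>e. ends (f e))" for S
    by (simp add: reach_def)
  have "f ` T - {f e} = f ` (T - {e})" for e
    using assms by (auto simp: inj_def)
  then show ?thesis
    using assms unfolding spanning_tree_def connected_mg_def acyclic_mg_def
    by (simp add: inj_image_subset_iff reach_image)
qed

lemma ntrees_image:
  assumes "inj f"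
  shows "ntrees V (f ` F) ends = ntrees V F (\<lambda>e. ends (f e))"
proof -
  have "{T'. spanning_tree V (f ` F) ends T'} = image f ` {T. spanning_tree V F (\<lambda>e. ends (f e)) T}"
  proof (intro equalityI subsetI)
    fix T' assume T': "T' \<in> {T'. spanning_tree V (f ` F) ends T'}"
    then obtain T where T: "T' = f ` T"
      by (auto simp: spanning_tree_def subset_image_iff)
    with T' have "spanning_tree V F (\<lambda>e. ends (f e)) T"
      by (simp add: spanning_tree_image[OF assms])
    with T show "T' \<in> image f ` {T. spanning_tree V F (\<lambda>e. ends (f e)) T}"
      by blast
  qed (use spanning_tree_image[OF assms] in auto)
  moreover have "inj_on (image f) X" for X
    using assms by (simp add: inj_on_def inj_image_eq_iff)
  ultimately show ?thesis
    unfolding ntrees_def by (simp add: card_image)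
qed

lemma ntrees_Diff_loop:
  assumes "fst (ends g) = snd (ends g)"
  shows "ntrees V (F - {g}) ends = ntrees V F ends"
proof -
  have "g \<notin> T" if "spanning_tree V F ends T" for T
    using that assms unfolding spanning_tree_def acyclic_mg_def by (metis reach_refl)
  then have "spanning_tree V (F - {g}) ends T \<longleftrightarrow> spanning_tree V F ends T" for T
    by (auto simp: spanning_tree_def)
  then show ?thesis by (simp add: ntrees_def)
qed

lemma connected_Diff_cycle_edge:
  assumes "connected_mg V S ends" "e \<in> S" "reach (S - {e}) ends (fst (ends e)) (snd (ends e))"
  shows "connected_mg V (S - {e}) ends"
proof -
  have adj_reach: "reach (S - {e}) ends a b" if "adj S ends a b" for a b
  proof -
    from that obtain e' where e': "e' \<in> S" "ends e' = (a, b) \<or> ends e' = (b, a)"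
      by (auto simp: adj_def)
    show ?thesis
    proof (cases "e' = e")
      case True
      with e'(2) assms(3) reach_sym[OF assms(3)] show ?thesis by auto
    next
      case False
      with e' have "adj (S - {e}) ends a b" by (auto simp: adj_def)
      then show ?thesis by (rule adj_imp_reach)
    qed
  qed
  have "reach (S - {e}) ends a b" if "reach S ends a b" for a b
    using that unfolding reach_def[of S]
    by (induction rule: rtranclp_induct) (auto intro: reach_trans adj_reach)
  with assms(1) show ?thesis
    by (auto simp: connected_mg_def)
qed

lemma spanning_tree_exists:
  "finite S \<Longrightarrow> S \<subseteq> E \<Longrightarrow> connected_mg V S ends \<Longrightarrow> \<exists>T. spanning_tree V E ends T"
proof (induction "card S" arbitrary: S rule: less_induct)
  case less
  show ?case
  proof (cases "acyclic_mg S ends")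
    case True
    with less.prems show ?thesis by (auto simp: spanning_tree_def)
  next
    case False
    then obtain e where e: "e \<in> S" "reach (S - {e}) ends (fst (ends e)) (snd (ends e))"
      by (auto simp: acyclic_mg_def)
    show ?thesis
    proof (rule less.hyps)
      show "card (S - {e}) < card S" using card_Diff1_less[OF less.prems(1) e(1)] .
      show "connected_mg V (S - {e}) ends"
        using connected_Diff_cycle_edge[OF less.prems(3) e] .
    qed (use less.prems in auto)
  qed
qed

lemma ntrees_pos:
  assumes "mgraph V E ends" "connected_mg V E ends"
  shows "ntrees V E ends > 0"
proof -
  have fin: "finite E" using assms(1) by (simp add: mgraph_def)
  obtain T where "spanning_tree V E ends T"
    using spanning_tree_exists[OF fin subset_refl assms(2)] by blast
  then show ?thesis
    unfolding ntrees_def using finite_spanning_trees[OF fin, of V ends] card_gt_0_iff by blast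
qed

text \<open>The graph G + xy, obtained by adding a new edge from x to y, is encoded with edge type
  'e option: the new edge is None and the old edge e is Some e.\<close>

lemma mgraph_add_edge:
  "mgraph V F ends \<Longrightarrow> x \<in> V \<Longrightarrow> y \<in> V \<Longrightarrow> mgraph V (insert None (Some ` F)) (case_option (x, y) ends)"
  by (auto simp: mgraph_def)

lemma ntrees_add_edge:
  assumes "mgraph V F ends" "x \<in> V" "y \<in> V"
  shows "ntrees V (insert None (Some ` F)) (case_option (x, y) ends)
    = ntrees V F ends + ntrees_id V F ends x y"
proof -
  let ?F = "insert None (Some ` F)" and ?ends = "case_option (x, y) ends"
  have Diff_new: "?F - {None} = Some ` F" by auto
  have old: "ntrees V (Some ` F) ?ends = ntrees V F ends"
    using ntrees_image[of Some V F ?ends] by simp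
  show ?thesis
  proof (cases "x = y")
    case True
    then have "ntrees V (?F - {None}) ?ends = ntrees V ?F ?ends"
      by (intro ntrees_Diff_loop) simp
    with old Diff_new True show ?thesis by (simp add: ntrees_id_def)
  next
    case False
    have "ntrees V ?F ?ends = ntrees V (?F - {None}) ?ends
        + ntrees (merge x y ` V) (?F - {None}) (merge_ends x y ?ends)"
      by (rule ntrees_deletion_contraction[OF mgraph_add_edge[OF assms]]) (use False in auto)
    moreover have "ntrees (merge x y ` V) (Some ` F) (merge_ends x y ?ends)
        = ntrees (merge x y ` V) F (merge_ends x y ends)"
      using ntrees_image[of Some "merge x y ` V" F "merge_ends x y ?ends"] by simp
    ultimately show ?thesis
      using old Diff_new False by (simp add: ntrees_id_def)
  qed
qed

section \<open>Rank-one updates of determinants\<close>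

definition outer_prod :: "'a :: times vec \<Rightarrow> 'a vec \<Rightarrow> 'a mat" where
  "outer_prod u v = mat (dim_vec u) (dim_vec v) (\<lambda>(i, j). u $ i * v $ j)"

lemma dim_outer_prod [simp]:
  "dim_row (outer_prod u v) = dim_vec u" "dim_col (outer_prod u v) = dim_vec v"
  by (simp_all add: outer_prod_def)

lemma outer_prod_carrier [simp]:
  "u \<in> carrier_vec n \<Longrightarrow> v \<in> carrier_vec m \<Longrightarrow> outer_prod u v \<in> carrier_mat n m"
  by (simp add: outer_prod_def)

lemma mult_outer_prod:
  fixes A :: "'a :: comm_semiring_1 mat"
  assumes "A \<in> carrier_mat n n" "u \<in> carrier_vec n" "v \<in> carrier_vec m"
  shows "A * outer_prod u v = outer_prod (A *\<^sub>v u) v"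
  using assms
  by (intro eq_matI) (auto simp: outer_prod_def scalar_prod_def sum_distrib_left ac_simps)

lemma outer_prod_mult_vec:
  fixes u :: "'a :: comm_semiring_1 vec"
  assumes "u \<in> carrier_vec n" "v \<in> carrier_vec m" "z \<in> carrier_vec m"
  shows "outer_prod u v *\<^sub>v z = (v \<bullet> z) \<cdot>\<^sub>v u"
  using assms
  by (intro eq_vecI) (auto simp: outer_prod_def scalar_prod_def sum_distrib_left ac_simps)

text \<open>Sylvester's determinant identity, via the two block factorizations
  [[1, 0], [B, 1]] [[1, -A], [0, 1 + B A]] = [[1, -A], [B, 1]]
    = [[1 + A B, -A], [0, 1]] [[1, 0], [B, 1]].\<close>

lemma det_one_plus_mult_commute:
  fixes A :: "'a :: idom mat"
  assumes A: "A \<in> carrier_mat n m" and B: "B \<in> carrier_mat m n"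
  shows "det (1\<^sub>m n + A * B) = det (1\<^sub>m m + B * A)"
proof -
  let ?M = "four_block_mat (1\<^sub>m n) (- A) B (1\<^sub>m m)"
  let ?L = "four_block_mat (1\<^sub>m n) (0\<^sub>m n m) B (1\<^sub>m m)"
  let ?U1 = "four_block_mat (1\<^sub>m n) (- A) (0\<^sub>m m n) (1\<^sub>m m + B * A)"
  let ?U2 = "four_block_mat (1\<^sub>m n + A * B) (- A) (0\<^sub>m m n) (1\<^sub>m m)"
  have AB: "A * B \<in> carrier_mat n n" and BA: "B * A \<in> carrier_mat m m"
    using A B by auto
  have "?L * ?U1 = four_block_mat (1\<^sub>m n * 1\<^sub>m n + 0\<^sub>m n m * 0\<^sub>m m n)
      (1\<^sub>m n * - A + 0\<^sub>m n m * (1\<^sub>m m + B * A))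
      (B * 1\<^sub>m n + 1\<^sub>m m * 0\<^sub>m m n) (B * - A + 1\<^sub>m m * (1\<^sub>m m + B * A))"
    by (rule mult_four_block_mat) (use A B in auto)
  also have "\<dots> = ?M"
    using A B BA by (intro arg_cong2[where f = "four_block_mat _ _"] eq_matI) auto
  finally have LU1: "?L * ?U1 = ?M" .
  have "?U2 * ?L = four_block_mat ((1\<^sub>m n + A * B) * 1\<^sub>m n + - A * B)
      ((1\<^sub>m n + A * B) * 0\<^sub>m n m + - A * 1\<^sub>m m)
      (0\<^sub>m m n * 1\<^sub>m n + 1\<^sub>m m * B) (0\<^sub>m m n * 0\<^sub>m n m + 1\<^sub>m m * 1\<^sub>m m)"
    by (rule mult_four_block_mat) (use A B in auto)
  also have "\<dots> = ?M"
    using A B AB by (intro arg_cong2[where f = "four_block_mat _ _"] eq_matI) auto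
  finally have U2L: "?U2 * ?L = ?M" .
  have detL: "det ?L = 1"
    using det_four_block_mat_upper_right_zero[of "1\<^sub>m n" n "0\<^sub>m n m" m B "1\<^sub>m m"] B by simp
  have "det ?M = det ?L * det ?U1"
    unfolding LU1[symmetric] by (rule det_mult) (use A B in auto)
  also have "det ?U1 = det (1\<^sub>m m + B * A)"
    using det_four_block_mat_lower_left_zero[of "1\<^sub>m n" n "- A" m "0\<^sub>m m n" "1\<^sub>m m + B * A"] A BA
    by simp
  finally have "det ?M = det (1\<^sub>m m + B * A)" using detL by simp
  moreover have "det ?M = det ?U2 * det ?L"
    unfolding U2L[symmetric] by (rule det_mult) (use A B in auto)
  moreover have "det ?U2 = det (1\<^sub>m n + A * B)"
    using det_four_block_mat_lower_left_zero[of "1\<^sub>m n + A * B" n "- A" m "0\<^sub>m m n" "1\<^sub>m m"] A AB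
    by simp
  ultimately show ?thesis using detL by simp
qed

lemma det_one_plus_outer_prod:
  fixes w :: "'a :: idom vec"
  assumes "w \<in> carrier_vec n" "v \<in> carrier_vec n"
  shows "det (1\<^sub>m n + outer_prod w v) = 1 + v \<bullet> w"
proof -
  define W where "W = mat n 1 (\<lambda>(i, _). w $ i)"
  define R where "R = mat 1 n (\<lambda>(_, j). v $ j)"
  have "W * R = outer_prod w v" "1\<^sub>m 1 + R * W = mat 1 1 (\<lambda>_. 1 + v \<bullet> w)"
    using assms
    by (auto intro!: eq_matI simp: W_def R_def outer_prod_def scalar_prod_def)
  moreover have "W \<in> carrier_mat n 1" "R \<in> carrier_mat 1 n"
    by (simp_all add: W_def R_def)
  ultimately have "det (1\<^sub>m n + outer_prod w v) = det (mat 1 1 (\<lambda>_. 1 + v \<bullet> w))"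
    using det_one_plus_mult_commute[of W n 1 R] by simp
  also have "\<dots> = 1 + v \<bullet> w"
    by (simp add: det_single)
  finally show ?thesis .
qed

lemma det_add_outer_prod:
  fixes A :: "'a :: idom mat"
  assumes A: "A \<in> carrier_mat n n" and z: "z \<in> carrier_vec n" and v: "v \<in> carrier_vec n"
    and Az: "A *\<^sub>v z = u"
  shows "det (A + outer_prod u v) = det A * (1 + v \<bullet> z)"
proof -
  have "A * (1\<^sub>m n + outer_prod z v) = A * 1\<^sub>m n + A * outer_prod z v"
    using A z v by (intro mult_add_distrib_mat) auto
  also have "\<dots> = A + outer_prod u v"
    using A z v Az by (simp add: mult_outer_prod)
  finally have "A * (1\<^sub>m n + outer_prod z v) = A + outer_prod u v" .
  then have "det (A + outer_prod u v) = det A * det (1\<^sub>m n + outer_prod z v)"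
    using A z v by (metis det_mult add_carrier_mat one_carrier_mat outer_prod_carrier)
  also have "det (1\<^sub>m n + outer_prod z v) = 1 + v \<bullet> z"
    by (rule det_one_plus_outer_prod[OF z v])
  finally show ?thesis .
qed

lemma right_inverse_mult_mat_vec:
  fixes A :: "'a :: semiring_1 mat"
  assumes "A \<in> carrier_mat n n" "B \<in> carrier_mat n n" "A * B = 1\<^sub>m n" "x \<in> carrier_vec n"
  shows "A *\<^sub>v (B *\<^sub>v x) = x"
proof -
  have "A *\<^sub>v (B *\<^sub>v x) = (A * B) *\<^sub>v x"
    using assoc_mult_mat_vec[OF assms(1,2,4)] by simp
  with assms(3,4) show ?thesis by simp
qed

lemma symmetric_right_inverse:
  fixes A :: "'a :: comm_semiring_1 mat"
  assumes A: "A \<in> carrier_mat n n" and B: "B \<in> carrier_mat n n"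
    and "transpose_mat A = A" and AB: "A * B = 1\<^sub>m n"
  shows "transpose_mat B = B"
proof -
  have Bt: "transpose_mat B \<in> carrier_mat n n" using B by simp
  have "transpose_mat B * A = transpose_mat (A * B)"
    using transpose_mult[OF A B] assms(3) by simp
  then have BtA: "transpose_mat B * A = 1\<^sub>m n" using AB by simp
  have "transpose_mat B = transpose_mat B * (A * B)" using AB Bt by simp
  also have "\<dots> = B" using assoc_mult_mat[OF Bt A B] BtA B by simp
  finally show ?thesis .
qed

lemma scalar_prod_mult_mat_vec_commute:
  fixes B :: "'a :: comm_ring_1 mat"
  assumes B: "B \<in> carrier_mat n n" and "transpose_mat B = B"
    and u: "u \<in> carrier_vec n" and v: "v \<in> carrier_vec n"
  shows "u \<bullet> (B *\<^sub>v v) = v \<bullet> (B *\<^sub>v u)"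
proof -
  have "u \<bullet> (B *\<^sub>v v) = (transpose_mat B *\<^sub>v u) \<bullet> v"
    using transpose_vec_mult_scalar[OF B v u] by simp
  also have "\<dots> = v \<bullet> (B *\<^sub>v u)"
    using assms by (simp add: comm_scalar_prod[of _ n])
  finally show ?thesis .
qed

lemma scalar_prod_mult_mat_vec_diff:
  fixes B :: "'a :: comm_ring_1 mat"
  assumes B: "B \<in> carrier_mat n n" and u1: "u1 \<in> carrier_vec n" and u2: "u2 \<in> carrier_vec n"
    and v1: "v1 \<in> carrier_vec n" and v2: "v2 \<in> carrier_vec n"
  shows "(u1 - u2) \<bullet> (B *\<^sub>v (v1 - v2))
    = u1 \<bullet> (B *\<^sub>v v1) - u1 \<bullet> (B *\<^sub>v v2) - u2 \<bullet> (B *\<^sub>v v1) + u2 \<bullet> (B *\<^sub>v v2)"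
proof -
  have w1: "B *\<^sub>v v1 \<in> carrier_vec n" and w2: "B *\<^sub>v v2 \<in> carrier_vec n"
    using B v1 v2 by auto
  have "(u1 - u2) \<bullet> (B *\<^sub>v (v1 - v2)) = (u1 - u2) \<bullet> (B *\<^sub>v v1 - B *\<^sub>v v2)"
    by (simp add: mult_minus_distrib_mat_vec[OF B v1 v2])
  also have "\<dots> = u1 \<bullet> (B *\<^sub>v v1 - B *\<^sub>v v2) - u2 \<bullet> (B *\<^sub>v v1 - B *\<^sub>v v2)"
    using u1 u2 w1 w2 by (intro minus_scalar_prod_distrib) auto
  finally show ?thesis
    by (simp add: scalar_prod_minus_distrib[OF u1 w1 w2] scalar_prod_minus_distrib[OF u2 w1 w2])
qed

lemma quadratic_form_polarization:
  fixes B :: "'a :: comm_ring_1 mat"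
  assumes B: "B \<in> carrier_mat n n" "transpose_mat B = B"
    and vecs: "a \<in> carrier_vec n" "b \<in> carrier_vec n" "c \<in> carrier_vec n" "d \<in> carrier_vec n"
  defines "Q \<equiv> \<lambda>x. x \<bullet> (B *\<^sub>v x)"
  shows "2 * ((a - b) \<bullet> (B *\<^sub>v (c - d))) = Q (a - d) + Q (b - c) - Q (a - c) - Q (b - d)"
proof -
  define p where "p x y = x \<bullet> (B *\<^sub>v y)" for x y
  have diff: "(x1 - x2) \<bullet> (B *\<^sub>v (y1 - y2)) = p x1 y1 - p x1 y2 - p x2 y1 + p x2 y2"
    if "x1 \<in> carrier_vec n" "x2 \<in> carrier_vec n" "y1 \<in> carrier_vec n" "y2 \<in> carrier_vec n"
    for x1 x2 y1 y2
    unfolding p_def using scalar_prod_mult_mat_vec_diff[OF B(1) that] .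
  have sym: "p x y = p y x" if "x \<in> carrier_vec n" "y \<in> carrier_vec n" for x y
    unfolding p_def using scalar_prod_mult_mat_vec_commute[OF B that] .
  have "p d a = p a d" "p c b = p b c" "p c a = p a c" "p d b = p b d"
    using sym[OF vecs(4,1)] sym[OF vecs(3,2)] sym[OF vecs(3,1)] sym[OF vecs(4,2)] .
  moreover have "Q (a - d) = p a a - p a d - p d a + p d d"
    "Q (b - c) = p b b - p b c - p c b + p c c"
    "Q (a - c) = p a a - p a c - p c a + p c c"
    "Q (b - d) = p b b - p b d - p d b + p d d"
    "(a - b) \<bullet> (B *\<^sub>v (c - d)) = p a c - p a d - p b c + p b d"
    unfolding Q_def using diff[OF vecs(1,4,1,4)] diff[OF vecs(2,3,2,3)] diff[OF vecs(1,3,1,3)]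
      diff[OF vecs(2,4,2,4)] diff[OF vecs(1,2,3,4)] .
  moreover have "2 * (ac - ad - bc + bd) = (aa - ad - ad + dd) + (bb - bc - bc + cc)
      - (aa - ac - ac + cc) - (bb - bd - bd + dd)" for aa ac ad bb bc bd cc dd :: 'a
    by (simp add: algebra_simps mult_2)
  ultimately show ?thesis
    by (simp only:)
qed

text \<open>Two successive rank-one updates; the second one is solved by
  z = l B c - B b with l = (c^T B b) / (1 + c^T B c), so that (A + c c^T) z = -b.\<close>

lemma det_add_two_outer_prod:
  fixes A B :: "'a :: field mat"
  assumes A: "A \<in> carrier_mat n n" and B: "B \<in> carrier_mat n n" and AB: "A * B = 1\<^sub>m n"
    and Bsym: "transpose_mat B = B"
    and b: "b \<in> carrier_vec n" and c: "c \<in> carrier_vec n"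
    and nonzero: "1 + c \<bullet> (B *\<^sub>v c) \<noteq> 0"
  shows "det (A + outer_prod c c + outer_prod (- b) b)
    = det A * ((1 + c \<bullet> (B *\<^sub>v c)) * (1 - b \<bullet> (B *\<^sub>v b)) + (b \<bullet> (B *\<^sub>v c))\<^sup>2)"
proof -
  define \<gamma> where "\<gamma> = c \<bullet> (B *\<^sub>v c)"
  define \<beta> where "\<beta> = b \<bullet> (B *\<^sub>v b)"
  define \<delta> where "\<delta> = c \<bullet> (B *\<^sub>v b)"
  define l where "l = \<delta> / (1 + \<gamma>)"
  define z where "z = l \<cdot>\<^sub>v (B *\<^sub>v c) - B *\<^sub>v b"
  have Bb: "B *\<^sub>v b \<in> carrier_vec n" and Bc: "B *\<^sub>v c \<in> carrier_vec n"
    using B b c by auto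
  have z: "z \<in> carrier_vec n" unfolding z_def using Bb Bc by auto
  have sym: "b \<bullet> (B *\<^sub>v c) = \<delta>"
    unfolding \<delta>_def by (rule scalar_prod_mult_mat_vec_commute[OF B Bsym b c])
  have Az: "A *\<^sub>v z = l \<cdot>\<^sub>v c - b"
  proof -
    have "A *\<^sub>v z = A *\<^sub>v (l \<cdot>\<^sub>v (B *\<^sub>v c)) - A *\<^sub>v (B *\<^sub>v b)"
      unfolding z_def using A Bb Bc by (intro mult_minus_distrib_mat_vec) auto
    also have "A *\<^sub>v (l \<cdot>\<^sub>v (B *\<^sub>v c)) = l \<cdot>\<^sub>v (A *\<^sub>v (B *\<^sub>v c))"
      by (rule mult_mat_vec[OF A Bc])
    finally show ?thesis
      using right_inverse_mult_mat_vec[OF A B AB] b c by simp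
  qed
  have cz: "c \<bullet> z = l * \<gamma> - \<delta>"
  proof -
    have "c \<bullet> z = c \<bullet> (l \<cdot>\<^sub>v (B *\<^sub>v c)) - c \<bullet> (B *\<^sub>v b)"
      unfolding z_def using c Bb Bc by (intro scalar_prod_minus_distrib) auto
    then show ?thesis unfolding \<gamma>_def \<delta>_def using c Bc by simp
  qed
  have bz: "b \<bullet> z = l * \<delta> - \<beta>"
  proof -
    have "b \<bullet> z = b \<bullet> (l \<cdot>\<^sub>v (B *\<^sub>v c)) - b \<bullet> (B *\<^sub>v b)"
      unfolding z_def using b Bb Bc by (intro scalar_prod_minus_distrib) auto
    then show ?thesis unfolding \<beta>_def using b Bc sym by simp
  qed
  have A'z: "(A + outer_prod c c) *\<^sub>v z = - b"
  proof -
    have "(A + outer_prod c c) *\<^sub>v z = A *\<^sub>v z + outer_prod c c *\<^sub>v z"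
      using A c z by (intro add_mult_distrib_mat_vec) auto
    also have "\<dots> = (l \<cdot>\<^sub>v c - b) + (l * \<gamma> - \<delta>) \<cdot>\<^sub>v c"
      using Az cz outer_prod_mult_vec[OF c c z] by simp
    also have "\<dots> = - b"
    proof -
      have l: "l + (l * \<gamma> - \<delta>) = 0"
        unfolding l_def using nonzero \<gamma>_def by (simp add: field_simps)
      have "l * c $ i - b $ i + (l * \<gamma> - \<delta>) * c $ i = (l + (l * \<gamma> - \<delta>)) * c $ i - b $ i" for i
        by (simp add: algebra_simps)
      then have "l * c $ i - b $ i + (l * \<gamma> - \<delta>) * c $ i = - b $ i" for i
        unfolding l by simp
      then show ?thesis
        using b c by (intro eq_vecI) auto
    qed
    finally show ?thesis .
  qed
  have "det (A + outer_prod c c + outer_prod (- b) b) = det (A + outer_prod c c) * (1 + b \<bullet> z)"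
    using A c b z A'z by (intro det_add_outer_prod[of _ n]) auto
  also have "det (A + outer_prod c c) = det A * (1 + \<gamma>)"
    unfolding \<gamma>_def using A B AB c
    by (intro det_add_outer_prod[of _ n]) (auto intro: right_inverse_mult_mat_vec)
  also have "det A * (1 + \<gamma>) * (1 + b \<bullet> z) = det A * ((1 + \<gamma>) * (1 - \<beta>) + \<delta>\<^sup>2)"
    unfolding bz l_def using nonzero \<gamma>_def by (simp add: field_simps power2_eq_square)
  finally show ?thesis
    unfolding \<gamma>_def \<beta>_def sym .
qed

lemma det_add_diag_unit:
  fixes A A' :: "'a :: comm_ring_1 mat"
  assumes A: "A \<in> carrier_mat n n" and A': "A' \<in> carrier_mat n n" and k: "k < n"
    and entries: "\<And>i j. i < n \<Longrightarrow> j < n \<Longrightarrow>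
      A' $$ (i, j) = A $$ (i, j) + (if i = k \<and> j = k then 1 else 0)"
  shows "det A' = det A + det (mat_delete A k k)"
proof -
  have cof: "cofactor A' k j = cofactor A k j" if j: "j < n" for j
  proof -
    have "mat_delete A' k j = mat_delete A k j"
    proof (rule eq_matI)
      fix i' j' assume "i' < dim_row (mat_delete A k j)" "j' < dim_col (mat_delete A k j)"
      then show "mat_delete A' k j $$ (i', j') = mat_delete A k j $$ (i', j')"
        unfolding mat_delete_def using A A' entries k j by auto
    qed (use A A' in auto)
    then show ?thesis by (simp add: cofactor_def)
  qed
  have "det A' = (\<Sum>j<n. A' $$ (k, j) * cofactor A' k j)"
    by (rule laplace_expansion_row[OF A' k])
  also have "\<dots> = (\<Sum>j<n. A $$ (k, j) * cofactor A k j + (if j = k then cofactor A k k else 0))"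
    by (rule sum.cong) (auto simp: entries k cof algebra_simps)
  also have "\<dots> = det A + cofactor A k k"
    by (simp add: sum.distrib laplace_expansion_row[OF A k] k)
  also have "cofactor A k k = det (mat_delete A k k)"
    by (simp add: cofactor_def)
  finally show ?thesis .
qed

section \<open>The matrix-tree theorem\<close>

definition incidence :: "('e \<Rightarrow> 'v \<times> 'v) \<Rightarrow> 'e \<Rightarrow> 'v \<Rightarrow> real" where
  "incidence ends e a = (if a = fst (ends e) then 1 else 0) - (if a = snd (ends e) then 1 else 0)"

text \<open>The list ws enumerates all vertices but a root r, so this is the Laplacian of (V, F)
  with the row and column of r deleted.\<close>

definition reduced_laplacian :: "'e set \<Rightarrow> ('e \<Rightarrow> 'v \<times> 'v) \<Rightarrow> 'v list \<Rightarrow> real mat" where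
  "reduced_laplacian F ends ws = mat (length ws) (length ws)
     (\<lambda>(i, j). \<Sum>e\<in>F. incidence ends e (ws ! i) * incidence ends e (ws ! j))"

lemma reduced_laplacian_carrier [simp]:
  "reduced_laplacian F ends ws \<in> carrier_mat (length ws) (length ws)"
  "dim_row (reduced_laplacian F ends ws) = length ws"
  "dim_col (reduced_laplacian F ends ws) = length ws"
  by (simp_all add: reduced_laplacian_def)

lemma index_reduced_laplacian:
  "i < length ws \<Longrightarrow> j < length ws \<Longrightarrow> reduced_laplacian F ends ws $$ (i, j)
    = (\<Sum>e\<in>F. incidence ends e (ws ! i) * incidence ends e (ws ! j))"
  by (simp add: reduced_laplacian_def)

lemma transpose_reduced_laplacian:
  "transpose_mat (reduced_laplacian F ends ws) = reduced_laplacian F ends ws"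
  by (intro eq_matI) (auto simp: index_reduced_laplacian mult.commute)

lemma reduced_laplacian_Diff_loop:
  assumes "finite F" "g \<in> F" "fst (ends g) = snd (ends g)"
  shows "reduced_laplacian (F - {g}) ends ws = reduced_laplacian F ends ws"
  using assms(3)
  by (intro eq_matI) (simp_all add: index_reduced_laplacian sum.remove[OF assms(1,2)] incidence_def)

lemma reduced_laplacian_merge_ends:
  assumes "r \<notin> set ws" "u \<notin> set ws"
  shows "reduced_laplacian F (merge_ends r u ends) ws = reduced_laplacian F ends ws"
proof -
  have "incidence (merge_ends r u ends) e a = incidence ends e a" if "a \<in> set ws" for e a
    using that assms by (auto simp: incidence_def merge_def split: prod.splits)
  then show ?thesis
    by (intro eq_matI) (simp_all add: index_reduced_laplacian)
qed

lemma distinct_take_drop_Suc: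
  assumes "distinct ws" "k < length ws"
  shows "distinct (take k ws @ drop (Suc k) ws)"
    and "set (take k ws @ drop (Suc k) ws) = set ws - {ws ! k}"
proof -
  have ws: "ws = take k ws @ ws ! k # drop (Suc k) ws"
    using assms(2) by (rule id_take_nth_drop)
  then have distinct: "distinct (take k ws @ ws ! k # drop (Suc k) ws)"
    using assms(1) by simp
  then show "distinct (take k ws @ drop (Suc k) ws)"
    by simp
  have "set ws = set (take k ws) \<union> {ws ! k} \<union> set (drop (Suc k) ws)"
    by (subst ws) auto
  with distinct show "set (take k ws @ drop (Suc k) ws) = set ws - {ws ! k}"
    by auto
qed

lemma mat_delete_reduced_laplacian:
  assumes "k < length ws"
  shows "mat_delete (reduced_laplacian F ends ws) k k
    = reduced_laplacian F ends (take k ws @ drop (Suc k) ws)"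
proof (rule eq_matI)
  fix i j
  assume "i < dim_row (reduced_laplacian F ends (take k ws @ drop (Suc k) ws))"
    "j < dim_col (reduced_laplacian F ends (take k ws @ drop (Suc k) ws))"
  then have "i < length ws - 1" "j < length ws - 1"
    using assms by auto
  then show "mat_delete (reduced_laplacian F ends ws) k k $$ (i, j)
      = reduced_laplacian F ends (take k ws @ drop (Suc k) ws) $$ (i, j)"
    using assms by (auto simp: mat_delete_def index_reduced_laplacian nth_append min_def)
qed (use assms in \<open>auto simp: mat_delete_def\<close>)

lemma index_reduced_laplacian_root_edge:
  assumes "finite F" "g \<in> F" "ends g = (r, u) \<or> ends g = (u, r)" "r \<notin> set ws" "distinct ws"
    "k < length ws" "ws ! k = u" "i < length ws" "j < length ws"
  shows "reduced_laplacian F ends ws $$ (i, j)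
    = reduced_laplacian (F - {g}) ends ws $$ (i, j) + (if i = k \<and> j = k then 1 else 0)"
proof -
  have "ws ! i \<noteq> r" "ws ! j \<noteq> r"
    using assms(4) nth_mem[OF assms(8)] nth_mem[OF assms(9)] by auto
  moreover have "ws ! i = u \<longleftrightarrow> i = k" "ws ! j = u \<longleftrightarrow> j = k"
    using nth_eq_iff_index_eq[OF assms(5,8,6)] nth_eq_iff_index_eq[OF assms(5,9,6)] assms(7)
    by simp_all
  moreover obtain s :: real where "s * s = 1"
    and "\<And>a. a \<noteq> r \<Longrightarrow> incidence ends g a = (if a = u then s else 0)"
  proof (cases "ends g = (r, u)")
    case True
    then show ?thesis by (intro that[of "-1"]) (auto simp: incidence_def)
  next
    case False
    with assms(3) have "ends g = (u, r)" by simp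
    then show ?thesis by (intro that[of 1]) (auto simp: incidence_def)
  qed
  ultimately have "incidence ends g (ws ! i) * incidence ends g (ws ! j)
      = (if i = k \<and> j = k then 1 else 0)"
    by simp
  then show ?thesis
    using assms(6-9) by (simp add: index_reduced_laplacian sum.remove[OF assms(1,2)])
qed

lemma det_reduced_laplacian_root_edge:
  assumes "finite F" "g \<in> F" "ends g = (r, u) \<or> ends g = (u, r)" "r \<notin> set ws" "distinct ws"
    "k < length ws" "ws ! k = u"
  shows "det (reduced_laplacian F ends ws) = det (reduced_laplacian (F - {g}) ends ws)
    + det (reduced_laplacian (F - {g}) (merge_ends r u ends) (take k ws @ drop (Suc k) ws))"
proof -
  have "det (reduced_laplacian F ends ws) = det (reduced_laplacian (F - {g}) ends ws)
      + det (mat_delete (reduced_laplacian (F - {g}) ends ws) k k)"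
    using index_reduced_laplacian_root_edge[where ends=ends and g=g, OF assms]
    by (intro det_add_diag_unit[of _ "length ws"]) (simp_all add: assms(6))
  moreover have "r \<notin> set (take k ws @ drop (Suc k) ws)" "u \<notin> set (take k ws @ drop (Suc k) ws)"
    using distinct_take_drop_Suc(2)[OF assms(5,6)] assms(4,7) by auto
  ultimately show ?thesis
    by (simp add: mat_delete_reduced_laplacian[OF assms(6)] reduced_laplacian_merge_ends)
qed

text \<open>Every row sums to zero, since both ends of each edge are listed in ws.\<close>

lemma det_reduced_laplacian_isolated_root:
  assumes "\<forall>e\<in>F. fst (ends e) \<in> set ws \<and> snd (ends e) \<in> set ws" "distinct ws" "ws \<noteq> []"
  shows "det (reduced_laplacian F ends ws) = 0"
proof -
  let ?n = "length ws"
  let ?one = "vec ?n (\<lambda>_. 1 :: real)"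
  have row_sum: "(\<Sum>j<?n. incidence ends e (ws ! j)) = 0" if "e \<in> F" for e
  proof -
    have "(\<Sum>j<?n. incidence ends e (ws ! j)) = sum (incidence ends e) (set ws)"
      using sum.reindex_bij_betw[OF bij_betw_nth[OF assms(2) refl refl], of "incidence ends e"]
      by (simp add: atLeast0LessThan)
    also have "\<dots> = 0"
      using assms(1) that by (simp add: incidence_def sum_subtractf sum.delta)
    finally show ?thesis .
  qed
  have "reduced_laplacian F ends ws *\<^sub>v ?one = 0\<^sub>v ?n"
  proof (rule eq_vecI)
    fix i assume "i < dim_vec (0\<^sub>v ?n :: real vec)"
    then have i: "i < ?n" by simp
    have "(reduced_laplacian F ends ws *\<^sub>v ?one) $ i
        = (\<Sum>j<?n. \<Sum>e\<in>F. incidence ends e (ws ! i) * incidence ends e (ws ! j))"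
      using i by (simp add: scalar_prod_def row_def index_reduced_laplacian atLeast0LessThan)
    also have "\<dots> = (\<Sum>e\<in>F. incidence ends e (ws ! i) * (\<Sum>j<?n. incidence ends e (ws ! j)))"
      by (simp add: sum.swap[of _ "{..<?n}" F] sum_distrib_left)
    finally show "(reduced_laplacian F ends ws *\<^sub>v ?one) $ i = 0\<^sub>v ?n $ i"
      using i row_sum by simp
  qed simp
  moreover have "?one \<noteq> 0\<^sub>v ?n"
  proof
    assume "?one = 0\<^sub>v ?n"
    then have "?one $ 0 = 0\<^sub>v ?n $ 0" by simp
    with assms(3) show False by simp
  qed
  moreover have "?one \<in> carrier_vec ?n" by simp
  ultimately show ?thesis
    using det_0_iff_vec_prod_zero[OF reduced_laplacian_carrier(1)[of F ends ws]] by blast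
qed

lemma ntrees_isolated_root:
  assumes "mgraph V F ends" "r \<in> V" "\<forall>e\<in>F. fst (ends e) \<noteq> r \<and> snd (ends e) \<noteq> r"
  shows "ntrees V F ends = (if V = {r} then 1 else 0)"
proof (cases "V = {r}")
  case True
  with assms have "F = {}"
    by (fastforce simp: mgraph_def)
  with True have "spanning_tree V F ends T \<longleftrightarrow> T = {}" for T
    by (auto simp: spanning_tree_def connected_mg_def acyclic_mg_def)
  with True show ?thesis
    by (simp add: ntrees_def)
next
  case False
  with assms(2) obtain v where v: "v \<in> V" "v \<noteq> r" by blast
  have "\<not> spanning_tree V F ends T" for T
  proof
    assume T: "spanning_tree V F ends T"
    then have "reach T ends r v"
      using assms(2) v(1) by (auto simp: spanning_tree_def connected_mg_def)
    moreover have "\<forall>e\<in>T. fst (ends e) \<noteq> r \<and> snd (ends e) \<noteq> r"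
      using T assms(3) by (auto simp: spanning_tree_def)
    ultimately show False
      using reach_avoiding_isolated v(2) by metis
  qed
  with False show ?thesis
    by (simp add: ntrees_def)
qed

lemma mgraph_merge: "mgraph V F ends \<Longrightarrow> mgraph (merge x y ` V) F (merge_ends x y ends)"
  by (auto simp: mgraph_def)

theorem matrix_tree:
  assumes "mgraph V F ends" "r \<in> V" "distinct ws" "set ws = V - {r}"
  shows "det (reduced_laplacian F ends ws) = real (ntrees V F ends)"
  using assms
proof (induction "card F" arbitrary: F V ends ws rule: less_induct)
  case less
  have finF: "finite F" and ends_V: "\<And>e. e \<in> F \<Longrightarrow> fst (ends e) \<in> V \<and> snd (ends e) \<in> V"
    using less.prems(1) by (simp_all add: mgraph_def)
  have IH: "det (reduced_laplacian (F - {g}) ends' ws') = real (ntrees V' (F - {g}) ends')"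
    if "g \<in> F" "mgraph V' (F - {g}) ends'" "r \<in> V'" "distinct ws'" "set ws' = V' - {r}"
    for g V' ends' ws'
    using less.hyps[OF card_Diff1_less[OF finF that(1)] that(2-5)] .
  consider (loop) g where "g \<in> F" "fst (ends g) = snd (ends g)"
    | (root_edge) g u where "g \<in> F" "ends g = (r, u) \<or> ends g = (u, r)" "u \<noteq> r"
    | (isolated_root) "\<forall>e\<in>F. fst (ends e) \<noteq> r \<and> snd (ends e) \<noteq> r"
    by (metis prod.collapse)
  then show ?case
  proof cases
    case loop
    then show ?thesis
      using IH[OF loop(1) mgraph_Diff[OF less.prems(1)] less.prems(2-4)]
        reduced_laplacian_Diff_loop[where ends=ends, OF finF loop]
        ntrees_Diff_loop[where ends=ends, OF loop(2)] by simp
  next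
    case root_edge
    have "u \<in> V"
      using ends_V[OF root_edge(1)] root_edge(2) by (metis fst_conv snd_conv)
    with root_edge(3) less.prems(4) have "u \<in> set ws"
      by simp
    then obtain k where k: "k < length ws" "ws ! k = u"
      by (auto simp: in_set_conv_nth)
    define ws' where "ws' = take k ws @ drop (Suc k) ws"
    have "merge r u ` V = V - {u}"
      using less.prems(2) root_edge(3) by (auto simp: merge_def image_iff)
    then have ws': "distinct ws'" "set ws' = merge r u ` V - {r}" "r \<in> merge r u ` V"
      using distinct_take_drop_Suc[OF less.prems(3) k(1)] k(2) less.prems(2,4) root_edge(3)
      unfolding ws'_def by auto
    have "det (reduced_laplacian F ends ws) = det (reduced_laplacian (F - {g}) ends ws)
        + det (reduced_laplacian (F - {g}) (merge_ends r u ends) ws')"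
      unfolding ws'_def
      using less.prems(3,4) by (intro det_reduced_laplacian_root_edge finF root_edge k) auto
    also have "\<dots> = real (ntrees V (F - {g}) ends)
        + real (ntrees (merge r u ` V) (F - {g}) (merge_ends r u ends))"
      using IH[OF root_edge(1) mgraph_Diff[OF less.prems(1)] less.prems(2-4)]
        IH[OF root_edge(1) mgraph_merge[OF mgraph_Diff[OF less.prems(1)]] ws'(3,1,2)] by simp
    also have "\<dots> = real (ntrees V F ends)"
      using ntrees_deletion_contraction[OF less.prems(1) root_edge(1,2)] root_edge(3) by simp
    finally show ?thesis .
  next
    case isolated_root
    show ?thesis
    proof (cases "ws = []")
      case True
      with less.prems(2,4) have "V = {r}" by auto
      moreover have "det (reduced_laplacian F ends ws) = 1"
        using True by (simp add: reduced_laplacian_def)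
      ultimately show ?thesis
        using ntrees_isolated_root[OF less.prems(1,2) isolated_root] by simp
    next
      case False
      then have "V \<noteq> {r}"
        using less.prems(4) by (metis Diff_cancel set_empty)
      moreover have "\<forall>e\<in>F. fst (ends e) \<in> set ws \<and> snd (ends e) \<in> set ws"
        using ends_V isolated_root by (simp add: less.prems(4))
      then have "det (reduced_laplacian F ends ws) = 0"
        using det_reduced_laplacian_isolated_root less.prems(3) False by blast
      ultimately show ?thesis
        using ntrees_isolated_root[OF less.prems(1,2) isolated_root] by simp
    qed
  qed
qed

section \<open>Spanning tree counts as quadratic forms\<close>

text \<open>The root, which is not listed in ws, is sent to the zero vector.\<close>

definition vertex_vec :: "'v list \<Rightarrow> 'v \<Rightarrow> real vec" where
  "vertex_vec ws x = vec (length ws) (\<lambda>i. if ws ! i = x then 1 else 0)"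

lemma vertex_vec_carrier [simp]:
  "vertex_vec ws x \<in> carrier_vec (length ws)" "dim_vec (vertex_vec ws x) = length ws"
  by (simp_all add: vertex_vec_def)

lemma incidence_eq_vertex_vec:
  "i < length ws \<Longrightarrow> incidence ends e (ws ! i)
    = (vertex_vec ws (fst (ends e)) - vertex_vec ws (snd (ends e))) $ i"
  by (simp add: vertex_vec_def incidence_def)

lemma reduced_laplacian_add_edge:
  assumes "finite F"
  shows "reduced_laplacian (insert None (Some ` F)) (case_option (x, y) ends) ws
    = reduced_laplacian F ends ws
      + outer_prod (vertex_vec ws x - vertex_vec ws y) (vertex_vec ws x - vertex_vec ws y)"
proof (rule eq_matI)
  fix i j assume "i < dim_row (reduced_laplacian F ends ws
      + outer_prod (vertex_vec ws x - vertex_vec ws y) (vertex_vec ws x - vertex_vec ws y))"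
    "j < dim_col (reduced_laplacian F ends ws
      + outer_prod (vertex_vec ws x - vertex_vec ws y) (vertex_vec ws x - vertex_vec ws y))"
  then have ij: "i < length ws" "j < length ws" by simp_all
  have "(\<Sum>e\<in>Some ` F. incidence (case_option (x, y) ends) e (ws ! i)
        * incidence (case_option (x, y) ends) e (ws ! j))
      = (\<Sum>e\<in>F. incidence ends e (ws ! i) * incidence ends e (ws ! j))"
    by (subst sum.reindex) (auto simp: incidence_def)
  then show "reduced_laplacian (insert None (Some ` F)) (case_option (x, y) ends) ws $$ (i, j)
      = (reduced_laplacian F ends ws
        + outer_prod (vertex_vec ws x - vertex_vec ws y) (vertex_vec ws x - vertex_vec ws y)) $$ (i, j)"
    using ij assms
    by (simp add: index_reduced_laplacian outer_prod_def incidence_def vertex_vec_def image_iff)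
qed simp_all

lemma reduced_laplacian_Diff_edge:
  assumes "finite F" "e \<in> F" "ends e = (p, q)"
  shows "reduced_laplacian (F - {e}) ends ws = reduced_laplacian F ends ws
    + outer_prod (- (vertex_vec ws p - vertex_vec ws q)) (vertex_vec ws p - vertex_vec ws q)"
proof (rule eq_matI)
  fix i j
  assume "i < dim_row (reduced_laplacian F ends ws
      + outer_prod (- (vertex_vec ws p - vertex_vec ws q)) (vertex_vec ws p - vertex_vec ws q))"
    "j < dim_col (reduced_laplacian F ends ws
      + outer_prod (- (vertex_vec ws p - vertex_vec ws q)) (vertex_vec ws p - vertex_vec ws q))"
  then have ij: "i < length ws" "j < length ws"
    by simp_all
  then show "reduced_laplacian (F - {e}) ends ws $$ (i, j) = (reduced_laplacian F ends ws
      + outer_prod (- (vertex_vec ws p - vertex_vec ws q)) (vertex_vec ws p - vertex_vec ws q)) $$ (i, j)"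
    using assms(3)
    by (simp add: index_reduced_laplacian outer_prod_def sum.remove[OF assms(1,2)]
        incidence_eq_vertex_vec[OF ij(1)] incidence_eq_vertex_vec[OF ij(2)] algebra_simps)
qed simp_all

lemma det_reduced_laplacian_add_edge:
  assumes "mgraph V F ends" "r \<in> V" "distinct ws" "set ws = V - {r}" "x \<in> V" "y \<in> V"
  shows "det (reduced_laplacian F ends ws
      + outer_prod (vertex_vec ws x - vertex_vec ws y) (vertex_vec ws x - vertex_vec ws y))
    = real (ntrees V F ends) + real (ntrees_id V F ends x y)"
proof -
  have "finite F" using assms(1) by (simp add: mgraph_def)
  then show ?thesis
    using matrix_tree[OF mgraph_add_edge[OF assms(1,5,6)] assms(2-4)]
      ntrees_add_edge[OF assms(1,5,6)] reduced_laplacian_add_edge[of F x y ends ws] by simp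
qed

lemma right_inverse_adj_mat:
  fixes A :: "'a :: field mat"
  assumes A: "A \<in> carrier_mat n n" and "det A \<noteq> 0"
  shows "A * ((1 / det A) \<cdot>\<^sub>m adj_mat A) = 1\<^sub>m n"
proof -
  have "A * ((1 / det A) \<cdot>\<^sub>m adj_mat A) = (1 / det A) \<cdot>\<^sub>m (A * adj_mat A)"
    using A adj_mat(1)[OF A] by (rule mult_smult_distrib)
  also have "A * adj_mat A = det A \<cdot>\<^sub>m 1\<^sub>m n"
    by (rule adj_mat(2)[OF A])
  finally show ?thesis
    using assms(2) by (intro eq_matI) auto
qed

lemma reduced_laplacian_right_inverse:
  assumes "mgraph V E ends" "connected_mg V E ends" "r \<in> V" "distinct ws" "set ws = V - {r}"
  obtains B where "B \<in> carrier_mat (length ws) (length ws)"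
    "reduced_laplacian E ends ws * B = 1\<^sub>m (length ws)"
proof
  let ?L = "reduced_laplacian E ends ws"
  have "det ?L \<noteq> 0"
    using matrix_tree[OF assms(1,3-5)] ntrees_pos[OF assms(1,2)] by simp
  then show "?L * ((1 / det ?L) \<cdot>\<^sub>m adj_mat ?L) = 1\<^sub>m (length ws)"
    by (simp add: right_inverse_adj_mat)
qed (simp add: adj_mat(1)[OF reduced_laplacian_carrier(1)])

context
  fixes V :: "'v set" and E :: "'e set" and ends :: "'e \<Rightarrow> 'v \<times> 'v"
    and r :: 'v and ws :: "'v list" and B :: "real mat"
  assumes mgraph: "mgraph V E ends" and root: "r \<in> V" and ws: "distinct ws" "set ws = V - {r}"
    and B: "B \<in> carrier_mat (length ws) (length ws)"
    and inverse: "reduced_laplacian E ends ws * B = 1\<^sub>m (length ws)"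
begin

lemma inverse_reduced_laplacian_symmetric: "transpose_mat B = B"
  using symmetric_right_inverse[OF reduced_laplacian_carrier(1) B
      transpose_reduced_laplacian inverse] .

text \<open>Kirchhoff: t(G_xy) / t(G) is the effective resistance between x and y.\<close>

lemma ntrees_id_eq_quadratic_form:
  assumes "x \<in> V" "y \<in> V"
  defines "c \<equiv> vertex_vec ws x - vertex_vec ws y"
  shows "real (ntrees_id V E ends x y) = real (ntrees V E ends) * (c \<bullet> (B *\<^sub>v c))"
proof -
  have c: "c \<in> carrier_vec (length ws)" by (simp add: c_def)
  have "real (ntrees V E ends) + real (ntrees_id V E ends x y)
      = det (reduced_laplacian E ends ws + outer_prod c c)"
    unfolding c_def using det_reduced_laplacian_add_edge[OF mgraph root ws assms(1,2)] by simp
  also have "\<dots> = det (reduced_laplacian E ends ws) * (1 + c \<bullet> (B *\<^sub>v c))"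
    using B c right_inverse_mult_mat_vec[OF reduced_laplacian_carrier(1) B inverse c]
    by (intro det_add_outer_prod[of _ "length ws"]) auto
  also have "det (reduced_laplacian E ends ws) = real (ntrees V E ends)"
    by (rule matrix_tree[OF mgraph root ws])
  finally show ?thesis by (simp add: algebra_simps)
qed

lemma ntrees_Diff_eq_quadratic_form:
  assumes "e \<in> E" "ends e = (p, q)"
  defines "b \<equiv> vertex_vec ws p - vertex_vec ws q"
  shows "real (ntrees V (E - {e}) ends) = real (ntrees V E ends) * (1 - b \<bullet> (B *\<^sub>v b))"
proof -
  have finE: "finite E" using mgraph by (simp add: mgraph_def)
  have b: "b \<in> carrier_vec (length ws)" by (simp add: b_def)
  have "real (ntrees V (E - {e}) ends) = det (reduced_laplacian (E - {e}) ends ws)"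
    by (rule matrix_tree[OF mgraph_Diff[OF mgraph] root ws, symmetric])
  also have "reduced_laplacian (E - {e}) ends ws = reduced_laplacian E ends ws + outer_prod (- b) b"
    unfolding b_def by (rule reduced_laplacian_Diff_edge[where ends=ends, OF finE assms(1,2)])
  also have "det (reduced_laplacian E ends ws + outer_prod (- b) b)
      = det (reduced_laplacian E ends ws) * (1 + b \<bullet> (B *\<^sub>v (- b)))"
    using B b right_inverse_mult_mat_vec[OF reduced_laplacian_carrier(1) B inverse, of "- b"]
    by (intro det_add_outer_prod[of _ "length ws"]) auto
  also have "B *\<^sub>v (- b) = - (B *\<^sub>v b)"
    using B b by (intro eq_vecI) auto
  finally show ?thesis
    using matrix_tree[OF mgraph root ws] b B by simp
qed

lemma ntrees_gt_0: "ntrees V E ends > 0"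
proof -
  have "det (reduced_laplacian E ends ws) * det B = 1"
    using det_mult[OF reduced_laplacian_carrier(1)[of E ends ws] B] inverse by simp
  then have "det (reduced_laplacian E ends ws) \<noteq> 0"
    by auto
  then show ?thesis
    using matrix_tree[OF mgraph root ws] by simp
qed

lemma ntrees_id_Diff_eq_quadratic_form:
  assumes "e \<in> E" "ends e = (p, q)" "x \<in> V" "y \<in> V"
  defines "b \<equiv> vertex_vec ws p - vertex_vec ws q" and "c \<equiv> vertex_vec ws x - vertex_vec ws y"
  shows "real (ntrees_id V (E - {e}) ends x y) = real (ntrees V E ends)
    * ((c \<bullet> (B *\<^sub>v c)) * (1 - b \<bullet> (B *\<^sub>v b)) + (b \<bullet> (B *\<^sub>v c))\<^sup>2)"
proof -
  let ?L = "reduced_laplacian E ends ws"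
  have finE: "finite E" using mgraph by (simp add: mgraph_def)
  have b: "b \<in> carrier_vec (length ws)" and c: "c \<in> carrier_vec (length ws)"
    by (simp_all add: b_def c_def)
  have "real (ntrees_id V E ends x y) = real (ntrees V E ends) * (c \<bullet> (B *\<^sub>v c))"
    unfolding c_def using assms(3,4) by (rule ntrees_id_eq_quadratic_form)
  then have "c \<bullet> (B *\<^sub>v c) \<ge> 0"
    using ntrees_gt_0 by (metis of_nat_0_le_iff of_nat_0_less_iff zero_le_mult_iff not_le)
  then have nonzero: "1 + c \<bullet> (B *\<^sub>v c) \<noteq> 0"
    by linarith
  have "real (ntrees V (E - {e}) ends) + real (ntrees_id V (E - {e}) ends x y)
      = det (reduced_laplacian (E - {e}) ends ws + outer_prod c c)"
    unfolding c_def
    using det_reduced_laplacian_add_edge[OF mgraph_Diff[OF mgraph] root ws assms(3,4)] by simp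
  also have "reduced_laplacian (E - {e}) ends ws = ?L + outer_prod (- b) b"
    unfolding b_def by (rule reduced_laplacian_Diff_edge[where ends=ends, OF finE assms(1,2)])
  also have "?L + outer_prod (- b) b + outer_prod c c = ?L + outer_prod c c + outer_prod (- b) b"
    using b c by (intro eq_matI) auto
  also have "det \<dots> = det ?L
      * ((1 + c \<bullet> (B *\<^sub>v c)) * (1 - b \<bullet> (B *\<^sub>v b)) + (b \<bullet> (B *\<^sub>v c))\<^sup>2)"
    by (rule det_add_two_outer_prod[OF reduced_laplacian_carrier(1) B inverse
          inverse_reduced_laplacian_symmetric b c nonzero])
  finally show ?thesis
    using ntrees_Diff_eq_quadratic_form[OF assms(1,2)] matrix_tree[OF mgraph root ws]
    unfolding b_def by (simp add: algebra_simps)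
qed


lemma ntrees_id_cross_term:
  assumes "p \<in> V" "q \<in> V" "s \<in> V" "t \<in> V"
  shows "real (ntrees_id V E ends p s) - real (ntrees_id V E ends q s)
      - real (ntrees_id V E ends p t) + real (ntrees_id V E ends q t)
    = - 2 * real (ntrees V E ends)
      * ((vertex_vec ws p - vertex_vec ws q) \<bullet> (B *\<^sub>v (vertex_vec ws s - vertex_vec ws t)))"
proof -
  define Q
    where "Q x y = (vertex_vec ws x - vertex_vec ws y) \<bullet> (B *\<^sub>v (vertex_vec ws x - vertex_vec ws y))"
    for x y
  have "2 * ((vertex_vec ws p - vertex_vec ws q) \<bullet> (B *\<^sub>v (vertex_vec ws s - vertex_vec ws t)))
      = Q p t + Q q s - Q p s - Q q t"
    unfolding Q_def using B inverse_reduced_laplacian_symmetric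
    by (intro quadratic_form_polarization[of _ "length ws"]) simp_all
  then have "real (ntrees V E ends) * (Q p s - Q q s - Q p t + Q q t) = real (ntrees V E ends)
      * (- 2 * ((vertex_vec ws p - vertex_vec ws q) \<bullet> (B *\<^sub>v (vertex_vec ws s - vertex_vec ws t))))"
    by simp
  then show ?thesis
    using ntrees_id_eq_quadratic_form[folded Q_def] assms by (simp add: algebra_simps)
qed

end

theorem theorem5p3:
  fixes V :: "'v set" and E :: "'e set" and ends :: "'e \<Rightarrow> 'v \<times> 'v"
    and ei :: 'e and p q s t :: 'v
  assumes "mgraph V E ends"
    and "connected_mg V E ends"
    and "ei \<in> E" and "ends ei = (p, q)"
    and "s \<in> V" and "t \<in> V"
  shows "real (ntrees V E ends) * real (ntrees_id V (E - {ei}) ends s t)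
       = real (ntrees_id V E ends s t) * real (ntrees V (E - {ei}) ends)
         + 1/4 * (real (ntrees_id V E ends p s) - real (ntrees_id V E ends q s)
                  - real (ntrees_id V E ends p t) + real (ntrees_id V E ends q t))^2"
proof -
  obtain ws where ws: "distinct ws" "set ws = V - {s}"
    using assms(1) finite_distinct_list[of "V - {s}"] by (auto simp: mgraph_def)
  then obtain B where B: "B \<in> carrier_mat (length ws) (length ws)"
    "reduced_laplacian E ends ws * B = 1\<^sub>m (length ws)"
    using reduced_laplacian_right_inverse[OF assms(1,2,5)] by blast
  have "p \<in> V" "q \<in> V"
    using assms(1,3,4) by (force simp: mgraph_def)+
  then show ?thesis
    unfolding ntrees_id_cross_term[OF assms(1,5) ws B \<open>p \<in> V\<close> \<open>q \<in> V\<close> assms(5,6)]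
      ntrees_id_Diff_eq_quadratic_form[OF assms(1,5) ws B assms(3-6)]
      ntrees_Diff_eq_quadratic_form[OF assms(1,5) ws B assms(3,4)]
      ntrees_id_eq_quadratic_form[OF assms(1,5) ws B assms(5,6)]
    by (simp add: algebra_simps power2_eq_square)
qed

end
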